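(* Let $M$ be a $po$-$\Gamma$-semigroup. Then $M$ is completely regular if and only if every bi-ideal of $M$ is semiprime.
   Context: A $po$-$\Gamma$-semigroup is a triple $(M,\Gamma,\le)$ where $M,\Gamma$ are nonempty sets with a map $M\times\Gamma\times M\to M$, $(a,\gamma,b)\mapsto a\gamma b$, satisfying $(a\gamma b)\mu c=a\gamma(b\mu c)$ for all $a,b,c\in M$, $\gamma,\mu\in\Gamma$, and $\le$ is a partial order on $M$ such that $a\le b$ implies $a\gamma c\le b\gamma c$ and $c\gamma a\le c\gamma b$ for all $c\in M$, $\gamma\in\Gamma$. For $A,B\subseteq M$, $A\Gamma B=\{a\gamma b: a\in A,\gamma\in\Gamma,b\in B\}$ (with $a\Gamma B$ meaning $\{a\}\Gamma B$, etc.), and $(A]=\{t\in M: t\le a \text{ for some } a\in A\}$. $M$ is regular if $a\in(a\Gamma M\Gamma a]$ for all $a\in M$; left regular if $a\in(M\Gamma a\Gamma a]$ for all $a\in M$; right regular if $a\in(a\Gamma a\Gamma M]$ for all $a\in M$; completely regular if it is regular, left regular and right regular. A bi-ideal of $M$ is a nonempty subset $B\subseteq M$ such that $B\Gamma M\Gamma B\subseteq B$ and, whenever $a\in B$, $b\in M$ and $b\le a$, then $b\in B$. A subset $B$ of $M$ is semiprime if for every $a\in M$, $a\Gamma a\subseteq B$ implies $a\in B$. *)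

theory Defs
  imports Main
begin

definition po_gamma_semigroup ::
  "'a set \<Rightarrow> 'g set \<Rightarrow> ('a \<Rightarrow> 'g \<Rightarrow> 'a \<Rightarrow> 'a) \<Rightarrow> ('a \<Rightarrow> 'a \<Rightarrow> bool) \<Rightarrow> bool" where
  "po_gamma_semigroup M G mult le \<longleftrightarrow>
     M \<noteq> {} \<and> G \<noteq> {} \<and>
     (\<forall>a\<in>M. \<forall>g\<in>G. \<forall>b\<in>M. mult a g b \<in> M) \<and>
     (\<forall>a\<in>M. \<forall>b\<in>M. \<forall>c\<in>M. \<forall>g\<in>G. \<forall>m\<in>G. mult (mult a g b) m c = mult a g (mult b m c)) \<and>
     (\<forall>a\<in>M. le a a) \<and>
     (\<forall>a\<in>M. \<forall>b\<in>M. le a b \<and> le b a \<longrightarrow> a = b) \<and>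
     (\<forall>a\<in>M. \<forall>b\<in>M. \<forall>c\<in>M. le a b \<and> le b c \<longrightarrow> le a c) \<and>
     (\<forall>a\<in>M. \<forall>b\<in>M. \<forall>c\<in>M. \<forall>g\<in>G. le a b \<longrightarrow> le (mult a g c) (mult b g c) \<and> le (mult c g a) (mult c g b))"

definition gprod ::
  "'g set \<Rightarrow> ('a \<Rightarrow> 'g \<Rightarrow> 'a \<Rightarrow> 'a) \<Rightarrow> 'a set \<Rightarrow> 'a set \<Rightarrow> 'a set" where
  "gprod G mult A B = {mult a g b | a g b. a \<in> A \<and> g \<in> G \<and> b \<in> B}"

definition down :: "'a set \<Rightarrow> ('a \<Rightarrow> 'a \<Rightarrow> bool) \<Rightarrow> 'a set \<Rightarrow> 'a set" where
  "down M le A = {t \<in> M. \<exists>a\<in>A. le t a}"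

definition regular_pg where
  "regular_pg M G mult le \<longleftrightarrow>
     (\<forall>a\<in>M. a \<in> down M le (gprod G mult (gprod G mult {a} M) {a}))"

definition left_regular_pg where
  "left_regular_pg M G mult le \<longleftrightarrow>
     (\<forall>a\<in>M. a \<in> down M le (gprod G mult (gprod G mult M {a}) {a}))"

definition right_regular_pg where
  "right_regular_pg M G mult le \<longleftrightarrow>
     (\<forall>a\<in>M. a \<in> down M le (gprod G mult (gprod G mult {a} {a}) M))"

definition completely_regular_pg where
  "completely_regular_pg M G mult le \<longleftrightarrow>
     regular_pg M G mult le \<and> left_regular_pg M G mult le \<and> right_regular_pg M G mult le"

definition bi_ideal_pg where
  "bi_ideal_pg M G mult le B \<longleftrightarrow>
     B \<subseteq> M \<and> B \<noteq> {} \<and>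
     gprod G mult (gprod G mult B M) B \<subseteq> B \<and>
     (\<forall>a\<in>B. \<forall>b\<in>M. le b a \<longrightarrow> b \<in> B)"

definition semiprime_pg where
  "semiprime_pg M G mult B \<longleftrightarrow>
     (\<forall>a\<in>M. gprod G mult {a} {a} \<subseteq> B \<longrightarrow> a \<in> B)"

end

theory Submission
  imports Defs
begin

text \<open>Write \<open>A \<Gamma> B\<close> for the set product and \<open>(A]\<close> for the down-closure. Complete regularity
  is equivalent to \<open>a \<in> (a\<Gamma>a\<Gamma>M\<Gamma>a\<Gamma>a]\<close> for every \<open>a\<close>: substituting the right and left
  regularity of \<open>a\<close> into the outer occurrences of \<open>a\<close> in \<open>a \<in> (a\<Gamma>M\<Gamma>a]\<close> gives it, and
  conversely this sandwich lies in \<open>a\<Gamma>M\<Gamma>a\<close>, \<open>M\<Gamma>a\<Gamma>a\<close> and \<open>a\<Gamma>a\<Gamma>M\<close>. A bi-ideal containing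
  \<open>a\<Gamma>a\<close> contains the sandwich, hence \<open>a\<close>. Conversely, semiprimeness of the bi-ideal
  \<open>(a\<Gamma>a \<union> a\<Gamma>a\<Gamma>M\<Gamma>a\<Gamma>a]\<close> generated by \<open>a\<Gamma>a\<close> puts \<open>a\<close> either in the sandwich or in
  \<open>(a\<Gamma>a]\<close>; in the latter case iterating \<open>a \<in> (a\<Gamma>a]\<close> produces \<open>a \<in> (a\<Gamma>a\<Gamma>a\<Gamma>a\<Gamma>a]\<close>,
  which again lies in the sandwich.\<close>

lemma gprod_mono: "A \<subseteq> A' \<Longrightarrow> B \<subseteq> B' \<Longrightarrow> gprod G mult A B \<subseteq> gprod G mult A' B'"
  unfolding gprod_def by blast

lemma gprod_Un_left: "gprod G mult (A \<union> A') B = gprod G mult A B \<union> gprod G mult A' B"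
  unfolding gprod_def by blast

lemma gprod_Un_right: "gprod G mult A (B \<union> B') = gprod G mult A B \<union> gprod G mult A B'"
  unfolding gprod_def by blast

lemma gprod_singleton_nonempty: "G \<noteq> {} \<Longrightarrow> gprod G mult {a} {a} \<noteq> {}"
  unfolding gprod_def by blast

lemma down_subset: "down M le A \<subseteq> M"
  unfolding down_def by blast

lemma down_mono: "A \<subseteq> B \<Longrightarrow> down M le A \<subseteq> down M le B"
  unfolding down_def by blast

lemma down_Un: "down M le (A \<union> B) = down M le A \<union> down M le B"
  unfolding down_def by blast

locale po_gamma_sgrp =
  fixes M :: "'a set" and G :: "'g set" and mult :: "'a \<Rightarrow> 'g \<Rightarrow> 'a \<Rightarrow> 'a" and le :: "'a \<Rightarrow> 'a \<Rightarrow> bool"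
  assumes po_gamma_semigroup: "po_gamma_semigroup M G mult le"
begin

abbreviation gamma_prod :: "'a set \<Rightarrow> 'a set \<Rightarrow> 'a set" (infixr "\<Gamma>" 70) where
  "A \<Gamma> B \<equiv> gprod G mult A B"

abbreviation down_closure :: "'a set \<Rightarrow> 'a set" ("'(_']") where
  "(A] \<equiv> down M le A"

lemma Gamma_nonempty: "G \<noteq> {}"
  using po_gamma_semigroup unfolding po_gamma_semigroup_def by simp

lemma mult_closed [simp]: "a \<in> M \<Longrightarrow> g \<in> G \<Longrightarrow> b \<in> M \<Longrightarrow> mult a g b \<in> M"
  using po_gamma_semigroup unfolding po_gamma_semigroup_def by simp

lemma mult_assoc:
  "\<lbrakk>a \<in> M; b \<in> M; c \<in> M; g \<in> G; h \<in> G\<rbrakk> \<Longrightarrow> mult (mult a g b) h c = mult a g (mult b h c)"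
  using po_gamma_semigroup unfolding po_gamma_semigroup_def by simp

lemma le_refl_carrier: "a \<in> M \<Longrightarrow> le a a"
  using po_gamma_semigroup unfolding po_gamma_semigroup_def by blast

lemma le_trans_carrier: "\<lbrakk>a \<in> M; b \<in> M; c \<in> M; le a b; le b c\<rbrakk> \<Longrightarrow> le a c"
  using po_gamma_semigroup unfolding po_gamma_semigroup_def by blast

lemma mult_mono:
  assumes "a \<in> M" "a' \<in> M" "b \<in> M" "b' \<in> M" "g \<in> G" "le a a'" "le b b'"
  shows "le (mult a g b) (mult a' g b')"
proof -
  have "le (mult a g b) (mult a' g b)" and "le (mult a' g b) (mult a' g b')"
    using po_gamma_semigroup assms unfolding po_gamma_semigroup_def by blast+
  with assms show ?thesis by (meson le_trans_carrier mult_closed)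
qed

lemma gprod_closed [simp]: "A \<subseteq> M \<Longrightarrow> B \<subseteq> M \<Longrightarrow> A \<Gamma> B \<subseteq> M"
  unfolding gprod_def by (auto intro: mult_closed)

lemma gprod_assoc [simp]:
  assumes "A \<subseteq> M" "B \<subseteq> M" "C \<subseteq> M"
  shows "(A \<Gamma> B) \<Gamma> C = A \<Gamma> B \<Gamma> C"
proof
  show "(A \<Gamma> B) \<Gamma> C \<subseteq> A \<Gamma> B \<Gamma> C"
    using assms unfolding gprod_def by (fastforce simp: mult_assoc)
  show "A \<Gamma> B \<Gamma> C \<subseteq> (A \<Gamma> B) \<Gamma> C"
    using assms unfolding gprod_def by (fastforce simp: mult_assoc[symmetric])
qed

lemma subset_down: "A \<subseteq> M \<Longrightarrow> A \<subseteq> (A]"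
  unfolding down_def by (auto intro: le_refl_carrier)

lemma down_down: "A \<subseteq> M \<Longrightarrow> ((A]] = (A]"
  unfolding down_def by (blast intro: le_trans_carrier le_refl_carrier)

lemma gprod_down: "A \<subseteq> M \<Longrightarrow> B \<subseteq> M \<Longrightarrow> (A] \<Gamma> (B] \<subseteq> (A \<Gamma> B]"
  unfolding down_def gprod_def by (auto intro: mult_mono)

lemma gprod_subset_down:
  "\<lbrakk>A \<subseteq> (A']; B \<subseteq> (B']; A' \<subseteq> M; B' \<subseteq> M\<rbrakk> \<Longrightarrow> A \<Gamma> B \<subseteq> (A' \<Gamma> B']"
  by (meson gprod_down gprod_mono order_trans)

lemma sandwich_subset:
  assumes "A \<subseteq> M"
  shows "A \<Gamma> A \<Gamma> M \<Gamma> A \<Gamma> A \<subseteq> A \<Gamma> M \<Gamma> A"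
    and "A \<Gamma> A \<Gamma> M \<Gamma> A \<Gamma> A \<subseteq> M \<Gamma> A \<Gamma> A"
    and "A \<Gamma> A \<Gamma> M \<Gamma> A \<Gamma> A \<subseteq> A \<Gamma> A \<Gamma> M"
proof -
  have "A \<Gamma> A \<Gamma> M \<Gamma> A \<Gamma> A = A \<Gamma> (A \<Gamma> M \<Gamma> A) \<Gamma> A"
    using assms by simp
  also have "\<dots> \<subseteq> A \<Gamma> M \<Gamma> A"
    using assms by (intro gprod_mono) simp_all
  finally show "A \<Gamma> A \<Gamma> M \<Gamma> A \<Gamma> A \<subseteq> A \<Gamma> M \<Gamma> A" .
  have "A \<Gamma> A \<Gamma> M \<Gamma> A \<Gamma> A = (A \<Gamma> A \<Gamma> M) \<Gamma> A \<Gamma> A"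
    using assms by simp
  also have "\<dots> \<subseteq> M \<Gamma> A \<Gamma> A"
    using assms by (intro gprod_mono) simp_all
  finally show "A \<Gamma> A \<Gamma> M \<Gamma> A \<Gamma> A \<subseteq> M \<Gamma> A \<Gamma> A" .
  show "A \<Gamma> A \<Gamma> M \<Gamma> A \<Gamma> A \<subseteq> A \<Gamma> A \<Gamma> M"
    using assms by (intro gprod_mono) simp_all
qed

lemma completely_regular_iff_down_sandwich:
  "completely_regular_pg M G mult le \<longleftrightarrow> (\<forall>a\<in>M. a \<in> ({a} \<Gamma> {a} \<Gamma> M \<Gamma> {a} \<Gamma> {a}])"
proof
  assume cr: "completely_regular_pg M G mult le"
  show "\<forall>a\<in>M. a \<in> ({a} \<Gamma> {a} \<Gamma> M \<Gamma> {a} \<Gamma> {a}]"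
  proof
    fix a assume "a \<in> M"
    define A where "A = {a}"
    have AM: "A \<subseteq> M" using \<open>a \<in> M\<close> by (simp add: A_def)
    have "a \<in> ((A \<Gamma> M) \<Gamma> A]" and "a \<in> ((M \<Gamma> A) \<Gamma> A]" and "a \<in> ((A \<Gamma> A) \<Gamma> M]"
      using cr \<open>a \<in> M\<close>
      unfolding completely_regular_pg_def regular_pg_def left_regular_pg_def right_regular_pg_def A_def
      by blast+
    then have reg: "a \<in> (A \<Gamma> M \<Gamma> A]" and left: "A \<subseteq> (M \<Gamma> A \<Gamma> A]" and right: "A \<subseteq> (A \<Gamma> A \<Gamma> M]"
      using AM by (simp_all add: A_def)
    have "A \<Gamma> M \<Gamma> A \<subseteq> (A \<Gamma> A \<Gamma> M] \<Gamma> M \<Gamma> (M \<Gamma> A \<Gamma> A]"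
      using left right by (intro gprod_mono) simp_all
    also have "\<dots> \<subseteq> ((A \<Gamma> A \<Gamma> M) \<Gamma> M \<Gamma> M \<Gamma> A \<Gamma> A]"
      using AM by (intro gprod_subset_down subset_down) simp_all
    also have "\<dots> \<subseteq> (A \<Gamma> A \<Gamma> M \<Gamma> A \<Gamma> A]"
    proof (rule down_mono)
      have "M \<Gamma> M \<Gamma> M \<Gamma> A \<Gamma> A = (M \<Gamma> M \<Gamma> M) \<Gamma> A \<Gamma> A"
        using AM by simp
      also have "\<dots> \<subseteq> M \<Gamma> A \<Gamma> A"
        using AM by (intro gprod_mono) simp_all
      finally show "(A \<Gamma> A \<Gamma> M) \<Gamma> M \<Gamma> M \<Gamma> A \<Gamma> A \<subseteq> A \<Gamma> A \<Gamma> M \<Gamma> A \<Gamma> A"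
        using AM by (simp add: gprod_mono)
    qed
    finally have "(A \<Gamma> M \<Gamma> A] \<subseteq> ((A \<Gamma> A \<Gamma> M \<Gamma> A \<Gamma> A]]"
      by (rule down_mono)
    also have "\<dots> = (A \<Gamma> A \<Gamma> M \<Gamma> A \<Gamma> A]"
      using AM by (simp add: down_down)
    finally show "a \<in> ({a} \<Gamma> {a} \<Gamma> M \<Gamma> {a} \<Gamma> {a}]"
      using reg by (auto simp: A_def)
  qed
next
  assume H: "\<forall>a\<in>M. a \<in> ({a} \<Gamma> {a} \<Gamma> M \<Gamma> {a} \<Gamma> {a}]"
  have "a \<in> ({a} \<Gamma> M \<Gamma> {a}] \<and> a \<in> (M \<Gamma> {a} \<Gamma> {a}] \<and> a \<in> ({a} \<Gamma> {a} \<Gamma> M]"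
    if "a \<in> M" for a
  proof -
    have aM: "{a} \<subseteq> M" using that by simp
    have "a \<in> ({a} \<Gamma> {a} \<Gamma> M \<Gamma> {a} \<Gamma> {a}]" using H that by blast
    then show ?thesis
      using down_mono[OF sandwich_subset(1)[OF aM]] down_mono[OF sandwich_subset(2)[OF aM]]
        down_mono[OF sandwich_subset(3)[OF aM]]
      by blast
  qed
  then show "completely_regular_pg M G mult le"
    unfolding completely_regular_pg_def regular_pg_def left_regular_pg_def right_regular_pg_def
    by simp
qed

lemma bi_ideal_down_gprod:
  assumes "bi_ideal_pg M G mult le B" and "A \<subseteq> B"
  shows "(A \<Gamma> M \<Gamma> A] \<subseteq> B"
proof -
  have "B \<subseteq> M" and "(B \<Gamma> M) \<Gamma> B \<subseteq> B" and "\<forall>b\<in>B. \<forall>t\<in>M. le t b \<longrightarrow> t \<in> B"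
    using assms(1) unfolding bi_ideal_pg_def by auto
  then have "B \<Gamma> M \<Gamma> B \<subseteq> B" and "(B] \<subseteq> B"
    unfolding down_def by auto
  moreover have "A \<Gamma> M \<Gamma> A \<subseteq> B \<Gamma> M \<Gamma> B"
    using assms(2) by (intro gprod_mono) simp_all
  ultimately show ?thesis
    by (meson down_mono order_trans)
qed

lemma bi_ideal_generated:
  assumes AM: "A \<subseteq> M" and "A \<noteq> {}"
  shows "bi_ideal_pg M G mult le (A \<union> A \<Gamma> M \<Gamma> A]"
proof -
  define X where "X = A \<union> A \<Gamma> M \<Gamma> A"
  have XM: "X \<subseteq> M" using AM by (simp add: X_def)
  have XM_sub: "X \<Gamma> M \<subseteq> A \<Gamma> M"
  proof -
    have "(A \<Gamma> M \<Gamma> A) \<Gamma> M = A \<Gamma> (M \<Gamma> A \<Gamma> M)" using AM by simp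
    also have "\<dots> \<subseteq> A \<Gamma> M" using AM by (intro gprod_mono) simp_all
    finally show ?thesis by (simp add: X_def gprod_Un_left)
  qed
  have MX_sub: "M \<Gamma> X \<subseteq> M \<Gamma> A"
  proof -
    have "M \<Gamma> A \<Gamma> M \<Gamma> A = (M \<Gamma> A \<Gamma> M) \<Gamma> A" using AM by simp
    also have "\<dots> \<subseteq> M \<Gamma> A" using AM by (intro gprod_mono) simp_all
    finally show ?thesis by (simp add: X_def gprod_Un_right)
  qed
  have "X \<Gamma> M \<Gamma> X = (X \<Gamma> M) \<Gamma> X" using XM by simp
  also have "\<dots> \<subseteq> (A \<Gamma> M) \<Gamma> X" using XM_sub by (rule gprod_mono) simp
  also have "\<dots> = A \<Gamma> M \<Gamma> X" using AM XM by simp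
  also have "\<dots> \<subseteq> A \<Gamma> M \<Gamma> A"
    using MX_sub by (rule gprod_mono[OF order_refl])
  also have "\<dots> \<subseteq> X" by (simp add: X_def)
  finally have "X \<Gamma> M \<Gamma> X \<subseteq> X" .
  have "(X] \<Gamma> M \<Gamma> (X] \<subseteq> (X \<Gamma> M \<Gamma> X]"
    using XM by (intro gprod_subset_down subset_down) simp_all
  also have "\<dots> \<subseteq> (X]"
    using \<open>X \<Gamma> M \<Gamma> X \<subseteq> X\<close> by (rule down_mono)
  finally have "((X] \<Gamma> M) \<Gamma> (X] \<subseteq> (X]"
    by (simp add: down_subset)
  moreover have "(X] \<noteq> {}"
    using subset_down[OF XM] \<open>A \<noteq> {}\<close> by (auto simp: X_def)
  moreover have "t \<in> (X]" if "b \<in> (X]" "t \<in> M" "le t b" for b t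
  proof -
    have "t \<in> ((X]]" using that unfolding down_def by blast
    then show ?thesis using XM by (simp add: down_down)
  qed
  ultimately have "bi_ideal_pg M G mult le (X]"
    unfolding bi_ideal_pg_def by (simp add: down_subset)
  then show ?thesis by (simp only: X_def)
qed

lemma down_square_imp_down_sandwich:
  assumes "a \<in> M" and "a \<in> ({a} \<Gamma> {a}]"
  shows "a \<in> ({a} \<Gamma> {a} \<Gamma> M \<Gamma> {a} \<Gamma> {a}]"
proof -
  define A where "A = {a}"
  have AM: "A \<subseteq> M" using assms(1) by (simp add: A_def)
  have A_below: "A \<subseteq> (A \<Gamma> A]" using assms(2) by (simp add: A_def)
  have step: "(A \<Gamma> Y] \<subseteq> (A \<Gamma> A \<Gamma> Y]" if "Y \<subseteq> M" for Y
  proof -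
    have "A \<Gamma> Y \<subseteq> ((A \<Gamma> A) \<Gamma> Y]"
      using A_below AM that by (intro gprod_subset_down subset_down) simp_all
    then have "(A \<Gamma> Y] \<subseteq> (((A \<Gamma> A) \<Gamma> Y]]"
      by (rule down_mono)
    then show ?thesis
      using AM that by (simp add: down_down)
  qed
  have "A \<subseteq> (A \<Gamma> A]" by (fact A_below)
  also have "\<dots> \<subseteq> (A \<Gamma> A \<Gamma> A]" using AM by (intro step)
  also have "\<dots> \<subseteq> (A \<Gamma> A \<Gamma> A \<Gamma> A]" using AM by (intro step) simp
  also have "\<dots> \<subseteq> (A \<Gamma> A \<Gamma> A \<Gamma> A \<Gamma> A]" using AM by (intro step) simp
  also have "\<dots> \<subseteq> (A \<Gamma> A \<Gamma> M \<Gamma> A \<Gamma> A]"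
    using AM by (intro down_mono gprod_mono) simp_all
  finally show ?thesis by (simp add: A_def)
qed

lemma completely_regular_imp_bi_ideals_semiprime:
  assumes "completely_regular_pg M G mult le" and "bi_ideal_pg M G mult le B"
  shows "semiprime_pg M G mult B"
  unfolding semiprime_pg_def
proof (intro ballI impI)
  fix a assume "a \<in> M" and "{a} \<Gamma> {a} \<subseteq> B"
  have "a \<in> ({a} \<Gamma> {a} \<Gamma> M \<Gamma> {a} \<Gamma> {a}]"
    using assms(1) \<open>a \<in> M\<close> by (simp add: completely_regular_iff_down_sandwich)
  moreover have "(({a} \<Gamma> {a}) \<Gamma> M \<Gamma> ({a} \<Gamma> {a})] \<subseteq> B"
    using assms(2) \<open>{a} \<Gamma> {a} \<subseteq> B\<close> by (rule bi_ideal_down_gprod)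
  ultimately show "a \<in> B"
    using \<open>a \<in> M\<close> by auto
qed

lemma bi_ideals_semiprime_imp_completely_regular:
  assumes semiprime: "\<And>B. bi_ideal_pg M G mult le B \<Longrightarrow> semiprime_pg M G mult B"
  shows "completely_regular_pg M G mult le"
  unfolding completely_regular_iff_down_sandwich
proof
  fix a assume "a \<in> M"
  define A where "A = {a} \<Gamma> {a}"
  have "A \<subseteq> M" and "A \<noteq> {}"
    using \<open>a \<in> M\<close> Gamma_nonempty gprod_singleton_nonempty by (simp_all add: A_def)
  then have "semiprime_pg M G mult (A \<union> A \<Gamma> M \<Gamma> A]"
    using semiprime bi_ideal_generated by blast
  moreover have "A \<subseteq> (A \<union> A \<Gamma> M \<Gamma> A]"
    using subset_down[of "A \<union> A \<Gamma> M \<Gamma> A"] \<open>A \<subseteq> M\<close> by simp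
  ultimately have "a \<in> (A] \<or> a \<in> (A \<Gamma> M \<Gamma> A]"
    using \<open>a \<in> M\<close> unfolding semiprime_pg_def A_def down_Un by blast
  then show "a \<in> ({a} \<Gamma> {a} \<Gamma> M \<Gamma> {a} \<Gamma> {a}]"
    using \<open>a \<in> M\<close> down_square_imp_down_sandwich by (auto simp: A_def)
qed

end

theorem proposition4:
  assumes "po_gamma_semigroup M G mult le"
  shows "completely_regular_pg M G mult le \<longleftrightarrow>
         (\<forall>B. bi_ideal_pg M G mult le B \<longrightarrow> semiprime_pg M G mult B)"
proof -
  interpret po_gamma_sgrp M G mult le using assms by (rule po_gamma_sgrp.intro)
  show ?thesis
    using completely_regular_imp_bi_ideals_semiprime bi_ideals_semiprime_imp_completely_regular
    by blast
qed

end
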